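(* Let $F$ be the cdf of a continuous nonnegative random variable with unbounded support $[0,\infty)$, density $f$ and hazard rate $h=f/(1-F)$. Let $\sigma_1,\sigma_2\geq0$, $\lambda_1,\lambda_2>0$, $r_1,r_2\geq0$, and let $n_1,n_2,n_1^*,n_2^*$ be positive integers with $n_1r_1+n_2r_2=1$ and $n_1^*r_1+n_2^*r_2=1$; put $n=n_1+n_2$, $n^*=n_1^*+n_2^*$. Let $U_n$ and $U_{n^*}$ be random variables with cdfs $$F_{U_n}(x)=n_1r_1F\!\left(\tfrac{x-\sigma_1}{\lambda_1}\right)I(x>\sigma_1)+n_2r_2F\!\left(\tfrac{x-\sigma_2}{\lambda_2}\right)I(x>\sigma_2),$$ $$F_{U_{n^*}}(x)=n_1^*r_1F\!\left(\tfrac{x-\sigma_1}{\lambda_1}\right)I(x>\sigma_1)+n_2^*r_2F\!\left(\tfrac{x-\sigma_2}{\lambda_2}\right)I(x>\sigma_2).$$ Suppose either that $F$ is IFR and $(\lambda_1,\lambda_2),(\sigma_1,\sigma_2)\in\mathcal{D}_2^+$, or that $F$ is DPFR and $(\lambda_1,\lambda_2),(\sigma_1,\sigma_2)\in\mathcal{E}_2^+$. If $n_1n_2^*\geq n_1^*n_2$, then $U_n\geq_{hr}U_{n^*}$.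
   Context: $I(x>\sigma)$ is $1$ if $x>\sigma$ and $0$ otherwise. $\mathcal{D}_2^+=\{(u_1,u_2):u_1\geq u_2>0\}$, $\mathcal{E}_2^+=\{(u_1,u_2):0<u_1\leq u_2\}$. $F$ is IFR if $h(x)$ is increasing in $x>0$; $F$ is DPFR (decreasing proportional failure rate) if $xh(x)$ is decreasing in $x>0$. $X\geq_{hr}Y$ means the hazard rate of $X$ is at most the hazard rate of $Y$ at every $x\geq0$ (equivalently $\bar F_X(x)/\bar F_Y(x)$ is increasing). *)

theory Defs
  imports "HOL-Analysis.Analysis"
begin

definition Ind_gt :: "real \<Rightarrow> real \<Rightarrow> real" where
  "Ind_gt x s = (if x > s then 1 else 0)"

definition hazard :: "(real \<Rightarrow> real) \<Rightarrow> (real \<Rightarrow> real) \<Rightarrow> real \<Rightarrow> real" where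
  "hazard F f x = f x / (1 - F x)"

definition IFR :: "(real \<Rightarrow> real) \<Rightarrow> (real \<Rightarrow> real) \<Rightarrow> bool" where
  "IFR F f \<longleftrightarrow> (\<forall>x y. 0 < x \<longrightarrow> x \<le> y \<longrightarrow> hazard F f x \<le> hazard F f y)"

definition DPFR :: "(real \<Rightarrow> real) \<Rightarrow> (real \<Rightarrow> real) \<Rightarrow> bool" where
  "DPFR F f \<longleftrightarrow> (\<forall>x y. 0 < x \<longrightarrow> x \<le> y \<longrightarrow> y * hazard F f y \<le> x * hazard F f x)"

definition hr_ge :: "(real \<Rightarrow> real) \<Rightarrow> (real \<Rightarrow> real) \<Rightarrow> bool" where
  "hr_ge FX FY \<longleftrightarrow>
     (\<forall>x y. 0 \<le> x \<longrightarrow> x \<le> y \<longrightarrow> (1 - FX x) / (1 - FY x) \<le> (1 - FX y) / (1 - FY y))"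

definition U_cdf :: "(real \<Rightarrow> real) \<Rightarrow> real \<Rightarrow> real \<Rightarrow> real \<Rightarrow> real \<Rightarrow> real \<Rightarrow> real
    \<Rightarrow> nat \<Rightarrow> nat \<Rightarrow> real \<Rightarrow> real" where
  "U_cdf F \<sigma>1 \<sigma>2 l1 l2 r1 r2 m1 m2 x =
     real m1 * r1 * F ((x - \<sigma>1) / l1) * Ind_gt x \<sigma>1
   + real m2 * r2 * F ((x - \<sigma>2) / l2) * Ind_gt x \<sigma>2"

end

theory Submission
  imports Defs
begin

text \<open>
  Write \<open>H = - ln (1 - F)\<close> for the cumulative hazard. The survival function of \<open>U\<^sub>n\<close> is the
  mixture \<open>n\<^sub>1r\<^sub>1 G\<^sub>1 + n\<^sub>2r\<^sub>2 G\<^sub>2\<close> of the survival functions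
  \<open>G\<^sub>i(x) = 1 - F((x - \<sigma>\<^sub>i)/\<lambda>\<^sub>i)\<close>, and for two such mixtures the ratio is increasing as soon as
  \<open>G\<^sub>1/G\<^sub>2\<close> is increasing and \<open>n\<^sub>1n\<^sub>2\<^sup>* \<ge> n\<^sub>1\<^sup>*n\<^sub>2\<close>. Under IFR the hazard rate at \<open>y\<close> is a
  subgradient of \<open>H\<close> at \<open>y\<close>, so \<open>H\<close> is convex; since \<open>H\<close> is also nondecreasing and the
  parameters are ordered, the increments of \<open>H\<close> along the first rescaled time axis are dominated by
  those along the second, which is exactly the monotonicity of \<open>G\<^sub>1/G\<^sub>2\<close>.
  The DPFR alternative is vacuous: \<open>x h(x) \<ge> x\<^sub>0 h(x\<^sub>0)\<close> for \<open>x \<le> x\<^sub>0\<close> would make the density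
  non-integrable at \<open>0\<close> unless it vanishes, contradicting strict monotonicity of \<open>F\<close>.
\<close>

lemma has_integral_ge_const_real:
  fixes f :: "real \<Rightarrow> real"
  assumes "(f has_integral I) {p..q}" "p \<le> q" "\<And>s. s \<in> {p<..<q} \<Longrightarrow> K \<le> f s"
  shows "K * (q - p) \<le> I"
proof (rule has_integral_le)
  show "((\<lambda>_. K) has_integral K * (q - p)) {p<..<q}"
    using has_integral_const_real[of K p q] assms(2)
    by (simp add: has_integral_Icc_iff_Ioo mult.commute)
  show "(f has_integral I) {p<..<q}"
    using assms(1) by (simp add: has_integral_Icc_iff_Ioo)
qed (use assms(3) in auto)

lemma has_integral_le_const_real:
  fixes f :: "real \<Rightarrow> real"
  assumes "(f has_integral I) {p..q}" "p \<le> q" "\<And>s. s \<in> {p<..<q} \<Longrightarrow> f s \<le> K"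
  shows "I \<le> K * (q - p)"
proof (rule has_integral_le)
  show "((\<lambda>_. K) has_integral K * (q - p)) {p<..<q}"
    using has_integral_const_real[of K p q] assms(2)
    by (simp add: has_integral_Icc_iff_Ioo mult.commute)
  show "(f has_integral I) {p<..<q}"
    using assms(1) by (simp add: has_integral_Icc_iff_Ioo)
qed (use assms(3) in auto)

text \<open>A discrete Gronwall argument: chain the local bound over \<open>N\<close> equal steps and let \<open>N \<rightarrow> \<infinity>\<close>;
  no differentiability of \<open>T\<close> is needed.\<close>

lemma exp_growth_le_of_linear_growth:
  fixes T :: "real \<Rightarrow> real"
  assumes step: "\<And>p q. x \<le> p \<Longrightarrow> p \<le> q \<Longrightarrow> q \<le> y \<Longrightarrow> T p * (1 + c * (q - p)) \<le> T q"
    and "x \<le> y"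
  shows "T x * exp (c * (y - x)) \<le> T y"
proof -
  have power_le: "T x * (1 + c * (y - x) / real N) ^ N \<le> T y"
    if N: "0 < N" "\<bar>c\<bar> * (y - x) \<le> real N" for N :: nat
  proof -
    define d where "d = (y - x) / real N"
    have d: "0 \<le> d" "real N * d = y - x"
      using N \<open>x \<le> y\<close> by (auto simp: d_def)
    have "\<bar>c * d\<bar> \<le> 1"
      using N \<open>x \<le> y\<close> by (simp add: d_def abs_mult divide_le_eq_1)
    then have cd: "0 \<le> 1 + c * d" by linarith
    have "T x * (1 + c * d) ^ k \<le> T (x + real k * d)" if "k \<le> N" for k
      using that
    proof (induction k)
      case 0
      then show ?case by simp
    next
      case (Suc k)
      have "real (Suc k) * d \<le> real N * d"
        using Suc.prems d(1) by (intro mult_right_mono) auto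
      then have "x + real (Suc k) * d \<le> y" using d(2) by linarith
      have "T x * (1 + c * d) ^ Suc k = T x * (1 + c * d) ^ k * (1 + c * d)"
        by simp
      also have "\<dots> \<le> T (x + real k * d) * (1 + c * d)"
        using Suc cd by (intro mult_right_mono) auto
      also have "\<dots> \<le> T (x + real (Suc k) * d)"
        using step[of "x + real k * d" "x + real (Suc k) * d"] d(1) \<open>x + real (Suc k) * d \<le> y\<close>
        by (simp add: algebra_simps)
      finally show ?case .
    qed
    from this[of N] show ?thesis
      using d by (simp add: d_def)
  qed
  obtain M :: nat where M: "\<bar>c\<bar> * (y - x) \<le> real M"
    using real_arch_simple by blast
  have "eventually (\<lambda>N. T x * (1 + c * (y - x) / real N) ^ N \<le> T y) sequentially"
    unfolding eventually_sequentially
    using power_le M by (intro exI[of _ "M + 1"]) force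
  moreover have "(\<lambda>N. T x * (1 + c * (y - x) / real N) ^ N) \<longlonglongrightarrow> T x * exp (c * (y - x))"
    by (intro tendsto_intros tendsto_exp_limit_sequentially)
  ultimately show ?thesis
    by (intro tendsto_upperbound) auto
qed

lemma convex_on_increment_le:
  fixes \<psi> :: "real \<Rightarrow> real"
  assumes "convex_on UNIV \<psi>" "mono \<psi>"
    and "a \<le> b" "a \<le> a'" "a' - a \<le> b' - b"
  shows "\<psi> a' + \<psi> b \<le> \<psi> a + \<psi> b'"
proof -
  define d where "d = a' - a"
  define \<mu> where "\<mu> = d / (b - a + d)"
  have \<mu>: "0 \<le> \<mu>" "\<mu> \<le> 1"
    using assms by (auto simp: \<mu>_def d_def divide_le_eq_1)
  have "\<mu> * (b - a + d) = d"
    using assms by (cases "b - a + d = 0") (auto simp: \<mu>_def d_def)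
  then have "(1 - \<mu>) * a + \<mu> * (b + d) = a + d" "\<mu> * a + (1 - \<mu>) * (b + d) = b"
    by (simp_all add: algebra_simps)
  then have "\<psi> (a + d) \<le> (1 - \<mu>) * \<psi> a + \<mu> * \<psi> (b + d)"
    and "\<psi> b \<le> \<mu> * \<psi> a + (1 - \<mu>) * \<psi> (b + d)"
    using convex_onD[OF assms(1), of \<mu> a "b + d"] convex_onD[OF assms(1), of "1 - \<mu>" a "b + d"] \<mu>
    by auto
  moreover have "\<psi> (b + d) \<le> \<psi> b'"
    using assms by (intro monoD[OF assms(2)]) (simp add: d_def)
  ultimately show ?thesis by (simp add: d_def algebra_simps)
qed

lemma max_zero_increment_le:
  fixes P P' Q Q' :: real
  assumes "P \<le> P'" "P' - P \<le> Q' - Q" "0 \<le> P \<Longrightarrow> P \<le> Q" "0 \<le> P' \<Longrightarrow> P' \<le> Q'"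
  shows "max P' 0 - max P 0 \<le> max Q' 0 - max Q 0"
  using assms unfolding max_def by (smt (verit))

lemma mixture_ratio_le:
  fixes \<alpha> \<beta> \<alpha>' \<beta>' p1 p2 q1 q2 :: real
  assumes "p1 * q2 \<le> q1 * p2" "\<beta> * \<alpha>' \<le> \<alpha> * \<beta>'"
    and "0 < p1" "0 < p2" "0 < q1" "0 < q2" "0 \<le> \<alpha>'" "0 \<le> \<beta>'" "0 < \<alpha>' + \<beta>'"
  shows "(\<alpha> * p1 + \<beta> * p2) / (\<alpha>' * p1 + \<beta>' * p2) \<le> (\<alpha> * q1 + \<beta> * q2) / (\<alpha>' * q1 + \<beta>' * q2)"
proof -
  have pos: "0 < \<alpha>' * s1 + \<beta>' * s2" if "0 < s1" "0 < s2" for s1 s2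
    using assms(7-9) that
    by (cases "\<alpha>' = 0") (auto intro: add_pos_nonneg add_nonneg_pos)
  have "(\<alpha> * q1 + \<beta> * q2) * (\<alpha>' * p1 + \<beta>' * p2) - (\<alpha> * p1 + \<beta> * p2) * (\<alpha>' * q1 + \<beta>' * q2)
      = (\<alpha> * \<beta>' - \<beta> * \<alpha>') * (q1 * p2 - p1 * q2)"
    by (simp add: algebra_simps)
  also have "\<dots> \<ge> 0"
    using assms(1,2) by simp
  finally show ?thesis
    using pos[of p1 p2] pos[of q1 q2] assms(3-6) by (simp add: divide_le_eq le_divide_eq mult.commute)
qed

locale cdf_with_density =
  fixes F f :: "real \<Rightarrow> real"
  assumes density_nonneg: "\<And>x. 0 \<le> f x"
    and cdf_has_integral: "\<And>x. 0 \<le> x \<Longrightarrow> (f has_integral F x) {0..x}"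
    and cdf_nonpos: "\<And>x. x \<le> 0 \<Longrightarrow> F x = 0"
    and cdf_less_one: "\<And>x. F x < 1"
begin

definition cum_hazard :: "real \<Rightarrow> real" where
  "cum_hazard x = - ln (1 - F x)"

lemma has_integral_density_interval:
  assumes "0 \<le> p" "p \<le> q"
  shows "(f has_integral (F q - F p)) {p..q}"
proof -
  have "f integrable_on {0..q}"
    using cdf_has_integral[of q] assms by (auto simp: integrable_on_def)
  then have "f integrable_on {p..q}"
    by (rule integrable_subinterval_real) (use assms in auto)
  then obtain I where I: "(f has_integral I) {p..q}"
    by (auto simp: integrable_on_def)
  have "(f has_integral (F p + I)) {0..q}"
    using has_integral_combine[OF assms cdf_has_integral[OF assms(1)] I] .
  then have "F q = F p + I"
    using cdf_has_integral[of q] assms by (auto dest: has_integral_unique)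
  with I show ?thesis by simp
qed

lemma cdf_nonneg: "0 \<le> F x"
  using cdf_nonpos[of x] has_integral_nonneg[OF cdf_has_integral[of x] density_nonneg]
  by (cases "0 \<le> x") auto

lemma mono_cdf: "mono F"
proof
  fix p q :: real assume "p \<le> q"
  show "F p \<le> F q"
  proof (cases "0 \<le> p")
    case True
    then show ?thesis
      using has_integral_nonneg[OF has_integral_density_interval[OF True \<open>p \<le> q\<close>] density_nonneg]
      by simp
  qed (use cdf_nonpos[of p] cdf_nonneg[of q] in auto)
qed

lemma hazard_nonneg: "0 \<le> hazard F f x"
  using density_nonneg[of x] cdf_less_one[of x] by (simp add: hazard_def)

lemma density_eq_hazard: "f x = hazard F f x * (1 - F x)"
  using cdf_less_one[of x] by (simp add: hazard_def)

lemma exp_minus_cum_hazard: "exp (- cum_hazard x) = 1 - F x"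
  using cdf_less_one[of x] by (simp add: cum_hazard_def)

lemma cum_hazard_nonpos: "x \<le> 0 \<Longrightarrow> cum_hazard x = 0"
  by (simp add: cum_hazard_def cdf_nonpos)

lemma cum_hazard_max_zero: "cum_hazard (max x 0) = cum_hazard x"
  using cum_hazard_nonpos[of x] cum_hazard_nonpos[of 0] by (simp add: max_def)

lemma mono_cum_hazard: "mono cum_hazard"
proof
  fix p q :: real assume "p \<le> q"
  then have "1 - F q \<le> 1 - F p"
    using monoD[OF mono_cdf] by simp
  then show "cum_hazard p \<le> cum_hazard q"
    using cdf_less_one[of p] cdf_less_one[of q] by (simp add: cum_hazard_def)
qed

lemma cum_hazard_nonneg: "0 \<le> cum_hazard x"
  using cdf_nonneg[of x] cdf_less_one[of x] by (simp add: cum_hazard_def)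

lemma IFR_cum_hazard_increment_ge:
  assumes "IFR F f" "0 < y" "y \<le> z"
  shows "hazard F f y * (z - y) \<le> cum_hazard z - cum_hazard y"
proof -
  let ?c = "hazard F f y"
  have "exp (cum_hazard y) * exp (?c * (z - y)) \<le> exp (cum_hazard z)"
  proof (rule exp_growth_le_of_linear_growth[OF _ \<open>y \<le> z\<close>])
    fix p q assume pq: "y \<le> p" "p \<le> q" "q \<le> z"
    have "?c * (1 - F q) * (q - p) \<le> F q - F p"
    proof (rule has_integral_ge_const_real[OF has_integral_density_interval \<open>p \<le> q\<close>])
      fix s assume s: "s \<in> {p<..<q}"
      have "?c \<le> hazard F f s"
        using assms s pq unfolding IFR_def by auto
      moreover have "1 - F q \<le> 1 - F s"
        using monoD[OF mono_cdf, of s q] s by simp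
      ultimately have "?c * (1 - F q) \<le> hazard F f s * (1 - F s)"
        using hazard_nonneg[of s] cdf_less_one[of q] by (intro mult_mono) auto
      then show "?c * (1 - F q) \<le> f s"
        by (simp add: density_eq_hazard)
    qed (use assms pq in auto)
    then show "exp (cum_hazard p) * (1 + ?c * (q - p)) \<le> exp (cum_hazard q)"
      using cdf_less_one[of p] cdf_less_one[of q]
      by (simp add: cum_hazard_def exp_minus field_simps)
  qed
  then show ?thesis
    by (simp flip: exp_add)
qed

lemma IFR_cum_hazard_increment_le:
  assumes "IFR F f" "0 < y" "0 \<le> x" "x \<le> y"
  shows "cum_hazard y - cum_hazard x \<le> hazard F f y * (y - x)"
proof -
  let ?c = "hazard F f y"
  have "exp (- cum_hazard x) * exp (- ?c * (y - x)) \<le> exp (- cum_hazard y)"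
  proof (rule exp_growth_le_of_linear_growth[OF _ \<open>x \<le> y\<close>])
    fix p q assume pq: "x \<le> p" "p \<le> q" "q \<le> y"
    have "F q - F p \<le> ?c * (1 - F p) * (q - p)"
    proof (rule has_integral_le_const_real[OF has_integral_density_interval \<open>p \<le> q\<close>])
      fix s assume s: "s \<in> {p<..<q}"
      have "hazard F f s \<le> ?c"
        using assms s pq unfolding IFR_def by auto
      moreover have "1 - F s \<le> 1 - F p"
        using monoD[OF mono_cdf, of p s] s by simp
      ultimately have "hazard F f s * (1 - F s) \<le> ?c * (1 - F p)"
        using hazard_nonneg[of y] cdf_less_one[of s] by (intro mult_mono) auto
      then show "f s \<le> ?c * (1 - F p)"
        by (simp add: density_eq_hazard)
    qed (use assms pq in auto)
    then show "exp (- cum_hazard p) * (1 + - ?c * (q - p)) \<le> exp (- cum_hazard q)"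
      by (simp add: exp_minus_cum_hazard algebra_simps)
  qed
  then show ?thesis
    by (simp flip: exp_add)
qed

lemma IFR_convex_cum_hazard:
  assumes "IFR F f"
  shows "convex_on UNIV cum_hazard"
proof (rule pos_convex_function)
  fix y z :: real
  show "(if y \<le> 0 then 0 else hazard F f y) * (z - y) \<le> cum_hazard z - cum_hazard y"
  proof (cases "0 < y")
    case y: True
    show ?thesis
    proof (cases "y \<le> z")
      case True
      then show ?thesis
        using IFR_cum_hazard_increment_ge[OF assms y] y by simp
    next
      case False
      have "cum_hazard y - cum_hazard (max z 0) \<le> hazard F f y * (y - max z 0)"
        using IFR_cum_hazard_increment_le[OF assms y] y False by simp
      moreover note cum_hazard_max_zero[of z]
      moreover have "hazard F f y * (y - max z 0) \<le> hazard F f y * (y - z)"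
        using hazard_nonneg[of y] by (intro mult_left_mono) auto
      ultimately show ?thesis
        using y by (simp add: right_diff_distrib)
    qed
  qed (simp add: cum_hazard_nonpos cum_hazard_nonneg)
qed simp

lemma IFR_location_scale_survival_ratio_mono:
  assumes "IFR F f" "0 < l2" "l2 \<le> l1" "\<sigma>2 \<le> \<sigma>1" "x \<le> y"
  shows "(1 - F ((x - \<sigma>1) / l1)) * (1 - F ((y - \<sigma>2) / l2))
       \<le> (1 - F ((y - \<sigma>1) / l1)) * (1 - F ((x - \<sigma>2) / l2))"
proof -
  define u where "u t = (t - \<sigma>1) / l1" for t
  define v where "v t = (t - \<sigma>2) / l2" for t
  have l1: "0 < l1" using assms by linarith
  have u_le_v: "u t \<le> v t" if "0 \<le> u t" for t
  proof -
    have "\<sigma>1 \<le> t"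
      using that l1 by (simp add: u_def zero_le_divide_iff)
    then have "u t \<le> (t - \<sigma>1) / l2"
      unfolding u_def using assms by (intro divide_left_mono) auto
    also have "\<dots> \<le> v t"
      unfolding v_def using assms by (intro divide_right_mono) auto
    finally show ?thesis .
  qed
  have "u y - u x = (y - x) / l1" "v y - v x = (y - x) / l2"
    by (simp_all add: u_def v_def diff_divide_distrib)
  moreover have "(y - x) / l1 \<le> (y - x) / l2"
    using assms by (intro divide_left_mono) auto
  moreover have "0 \<le> (y - x) / l1"
    using assms l1 by simp
  \<comment> \<open>\<open>cum_hazard\<close> ignores negative arguments, and the positive parts of the rescaled times are
    ordered and have ordered increments, although \<open>u\<close> and \<open>v\<close> themselves are not ordered.\<close>
  ultimately have inc: "max (u y) 0 - max (u x) 0 \<le> max (v y) 0 - max (v x) 0"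
    using u_le_v by (intro max_zero_increment_le) auto
  have start: "max (u x) 0 \<le> max (v x) 0"
    using u_le_v[of x] by (auto simp: max_def)
  have "u x \<le> u y"
    using \<open>u y - u x = (y - x) / l1\<close> \<open>0 \<le> (y - x) / l1\<close> by simp
  then have "max (u x) 0 \<le> max (u y) 0"
    by simp
  from convex_on_increment_le[OF IFR_convex_cum_hazard[OF assms(1)] mono_cum_hazard start this inc]
  have "cum_hazard (u y) + cum_hazard (v x) \<le> cum_hazard (u x) + cum_hazard (v y)"
    by (simp only: cum_hazard_max_zero)
  then have "exp (- (cum_hazard (u x) + cum_hazard (v y)))
      \<le> exp (- (cum_hazard (u y) + cum_hazard (v x)))"
    by simp
  then show ?thesis
    by (simp only: minus_add_distrib exp_add exp_minus_cum_hazard u_def v_def)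
qed

lemma DPFR_density_vanishes:
  assumes "DPFR F f" "0 < x0"
  shows "f x0 = 0"
proof (rule ccontr)
  assume "f x0 \<noteq> 0"
  define K where "K = x0 * f x0"
  have K: "0 < K"
    using \<open>f x0 \<noteq> 0\<close> density_nonneg[of x0] assms(2) by (simp add: K_def)
  have K_le: "K / s \<le> f s" if "0 < s" "s \<le> x0" for s
  proof -
    have "x0 * hazard F f x0 \<le> s * hazard F f s"
      using assms(1) that unfolding DPFR_def by blast
    then have "K \<le> s * hazard F f s * (1 - F x0)"
      using cdf_less_one[of x0] by (simp add: K_def density_eq_hazard[of x0] mult_right_mono)
    also have "\<dots> \<le> s * hazard F f s * (1 - F s)"
      using that hazard_nonneg[of s] monoD[OF mono_cdf, of s x0] by (intro mult_left_mono) auto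
    finally show ?thesis
      using that by (simp add: divide_le_eq density_eq_hazard[of s] ac_simps)
  qed
  define e where "e = x0 * exp (- 2 / K)"
  have e: "0 < e" "e \<le> x0"
    using assms(2) K by (auto simp: e_def mult_le_cancel_left1)
  have "((\<lambda>s. K * ln s) has_vector_derivative K / s) (at s within {e..x0})" if "s \<in> {e..x0}" for s
    unfolding has_real_derivative_iff_has_vector_derivative[symmetric]
    using that e by (auto intro!: derivative_eq_intros simp: field_simps)
  from fundamental_theorem_of_calculus[OF e(2) this]
  have "((\<lambda>s. K / s) has_integral (K * ln x0 - K * ln e)) {e..x0}"
    by simp
  moreover have "(f has_integral (F x0 - F e)) {e..x0}"
    using e by (intro has_integral_density_interval) auto
  ultimately have "K * ln x0 - K * ln e \<le> F x0 - F e"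
    by (rule has_integral_le) (use e K_le in auto)
  moreover have "ln e = ln x0 - 2 / K"
    using assms(2) by (simp add: e_def ln_mult)
  then have "K * ln x0 - K * ln e = 2"
    using K by (simp add: right_diff_distrib)
  ultimately show False
    using cdf_nonneg[of e] cdf_less_one[of x0] by linarith
qed

lemma DPFR_cdf_vanishes:
  assumes "DPFR F f"
  shows "F x = 0"
proof (cases "0 \<le> x")
  case True
  have "(f has_integral F x) {0<..<x}"
    using cdf_has_integral[OF True] by (simp add: has_integral_Icc_iff_Ioo)
  then have "((\<lambda>_. 0) has_integral F x) {0<..<x}"
    using DPFR_density_vanishes[OF assms] by (subst has_integral_cong[symmetric]) auto
  then show ?thesis
    by (simp add: has_integral_0_eq)
qed (simp add: cdf_nonpos)

lemma one_minus_U_cdf: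
  assumes "0 < l1" "0 < l2" "real m1 * r1 + real m2 * r2 = 1"
  shows "1 - U_cdf F \<sigma>1 \<sigma>2 l1 l2 r1 r2 m1 m2 t
       = real m1 * r1 * (1 - F ((t - \<sigma>1) / l1)) + real m2 * r2 * (1 - F ((t - \<sigma>2) / l2))"
proof -
  have "F ((t - \<sigma>) / l) * Ind_gt t \<sigma> = F ((t - \<sigma>) / l)" if "0 < l" for \<sigma> l
    using that cdf_nonpos[of "(t - \<sigma>) / l"] by (auto simp: Ind_gt_def divide_nonpos_pos)
  then have "U_cdf F \<sigma>1 \<sigma>2 l1 l2 r1 r2 m1 m2 t
      = real m1 * r1 * F ((t - \<sigma>1) / l1) + real m2 * r2 * F ((t - \<sigma>2) / l2)"
    using assms(1,2) by (simp only: U_cdf_def mult.assoc)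
  then show ?thesis
    using assms(3) by (simp add: algebra_simps)
qed

end

theorem theorem4p3:
  fixes F f :: "real \<Rightarrow> real"
    and \<sigma>1 \<sigma>2 l1 l2 r1 r2 :: real
    and n1 n2 n1s n2s :: nat
  assumes dens_nonneg: "\<And>x. f x \<ge> 0"
    and dens: "\<And>x. x \<ge> 0 \<Longrightarrow> (f has_integral F x) {0..x}"
    and F_neg: "\<And>x. x \<le> 0 \<Longrightarrow> F x = 0"
    and F_lim: "(F \<longlongrightarrow> 1) at_top"
    and supp_lt1: "\<And>x. F x < 1"
    and supp_strict: "strict_mono_on {0..} F"
    and \<sigma>_nn: "\<sigma>1 \<ge> 0" "\<sigma>2 \<ge> 0"
    and l_pos: "l1 > 0" "l2 > 0"
    and r_nn: "r1 \<ge> 0" "r2 \<ge> 0"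
    and n_pos: "n1 > 0" "n2 > 0" "n1s > 0" "n2s > 0"
    and sum1: "real n1 * r1 + real n2 * r2 = 1"
    and sum1s: "real n1s * r1 + real n2s * r2 = 1"
    and cases: "(IFR F f \<and> l1 \<ge> l2 \<and> l2 > 0 \<and> \<sigma>1 \<ge> \<sigma>2 \<and> \<sigma>2 > 0)
              \<or> (DPFR F f \<and> 0 < l1 \<and> l1 \<le> l2 \<and> 0 < \<sigma>1 \<and> \<sigma>1 \<le> \<sigma>2)"
    and ineq: "n1 * n2s \<ge> n1s * n2"
  shows "hr_ge (U_cdf F \<sigma>1 \<sigma>2 l1 l2 r1 r2 n1 n2) (U_cdf F \<sigma>1 \<sigma>2 l1 l2 r1 r2 n1s n2s)"
proof -
  interpret cdf_with_density F f
    using dens_nonneg dens F_neg supp_lt1 by unfold_locales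
  have "\<not> DPFR F f"
  proof
    assume "DPFR F f"
    then have "F 1 = F 0"
      using DPFR_cdf_vanishes by simp
    moreover have "F 0 < F 1"
      using supp_strict by (simp add: strict_mono_on_def)
    ultimately show False by simp
  qed
  then have ifr: "IFR F f" "l2 \<le> l1" "\<sigma>2 \<le> \<sigma>1"
    using cases by auto
  have "real n1s * real n2 \<le> real n1 * real n2s"
    using ineq by (metis of_nat_mono of_nat_mult)
  from mult_right_mono[OF this mult_nonneg_nonneg[OF r_nn]]
  have weights: "real n2 * r2 * (real n1s * r1) \<le> real n1 * r1 * (real n2s * r2)"
    by (simp add: ac_simps)
  show ?thesis
    unfolding hr_ge_def one_minus_U_cdf[OF l_pos sum1] one_minus_U_cdf[OF l_pos sum1s]
  proof (intro allI impI mixture_ratio_le)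
    fix x y :: real assume "x \<le> y"
    then show "(1 - F ((x - \<sigma>1) / l1)) * (1 - F ((y - \<sigma>2) / l2))
        \<le> (1 - F ((y - \<sigma>1) / l1)) * (1 - F ((x - \<sigma>2) / l2))"
      by (rule IFR_location_scale_survival_ratio_mono[OF ifr(1) l_pos(2) ifr(2,3)])
  qed (use weights r_nn sum1s cdf_less_one in auto)
qed

end
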